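(* Let $\sum_{\mathbf i}a_{\mathbf i}\,x_{i_1}x_{i_2}\cdots x_{i_n}$ ($a_{\mathbf i}\in K$) be a homogeneous primitive element of degree $n$ of the free associative algebra $K\langle x_1,\dots,x_n\rangle$. Then $$\sum_{\mathbf i}a_{\mathbf i}\,(\cdots((x_{i_1}\cdot x_{i_2})\cdot x_{i_3})\cdots)\cdot x_{i_n}\quad\text{and}\quad\sum_{\mathbf i}a_{\mathbf i}\,x_{i_1}\cdot(x_{i_2}\cdot(\cdots(x_{i_{n-1}}\cdot x_{i_n})\cdots))$$ are homogeneous primitive elements of degree $n$ of $K\{x_1,\dots,x_n\}$. In particular, for $n\ge3$, $\mathrm{Prim}\,\mathcal Mag(n)$ contains at least two copies of the $\Sigma_n$-representation $\mathcal Lie(n)$.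
   Context: $K$ is a field of characteristic $0$. In $K\langle x_1,\dots,x_n\rangle$ (free unital associative algebra), an element $f$ is primitive if $\Delta(f)=f\otimes1+1\otimes f$, where $\Delta$ is the algebra homomorphism with $\Delta(x_i)=x_i\otimes1+1\otimes x_i$. $K\{x_1,\dots,x_n\}$ is the free unitary magma algebra (non-associative, non-commutative, unit $1$, product $a\cdot b$); its tensor square is a magma algebra componentwise with $1\cdot a=a\cdot1=a$, and the co-addition $\Delta_a$ is the unital algebra homomorphism with $\Delta_a(x_i)=x_i\otimes1+1\otimes x_i$; $f$ is primitive if $\Delta_a(f)=f\otimes1+1\otimes f$. $\mathrm{Prim}\,\mathcal Mag(n)$ is the space of primitive elements of $K\{x_1,\dots,x_n\}$ multilinear of degree $n$, with $\Sigma_n$ acting by permuting variables; $\mathcal Lie(n)$ is the $\Sigma_n$-module of multilinear Lie polynomials of degree $n$ in $x_1,\dots,x_n$ (of dimension $(n-1)!$). *)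

theory Defs
  imports "HOL-Combinatorics.Permutations"
begin

text \<open>An element of the free unital associative algebra is given by its coefficient
  function on words (lists of variable indices); the word [i1,...,ik] stands for the
  monomial x_i1 ... x_ik, the empty word for 1. Genuine elements have finite support.
  An element of the tensor square is a coefficient function on pairs of words
  (basis u (x) v).\<close>

type_synonym 'k assoc = "nat list \<Rightarrow> 'k"
type_synonym 'k assoc2 = "nat list \<times> nat list \<Rightarrow> 'k"

definition amul :: "'k::comm_ring_1 assoc \<Rightarrow> 'k assoc \<Rightarrow> 'k assoc" where
  "amul f g w = (\<Sum>k\<le>length w. f (take k w) * g (drop k w))"

text \<open>Product in the tensor square: (u (x) v)(u' (x) v') = uu' (x) vv'.\<close>
definition a2mul :: "'k::comm_ring_1 assoc2 \<Rightarrow> 'k assoc2 \<Rightarrow> 'k assoc2" where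
  "a2mul F G p = (\<Sum>k\<le>length (fst p). \<Sum>l\<le>length (snd p).
      F (take k (fst p), take l (snd p)) * G (drop k (fst p), drop l (snd p)))"

definition a2one :: "'k::comm_ring_1 assoc2" where
  "a2one p = (if p = ([], []) then 1 else 0)"

definition a2gen :: "nat \<Rightarrow> 'k::comm_ring_1 assoc2" where
  "a2gen i p = (if p = ([i], []) then 1 else 0) + (if p = ([], [i]) then 1 else 0)"

text \<open>Delta on the monomial x_i1...x_ik: Delta(x_i1) ... Delta(x_ik) (Delta is an algebra hom).\<close>
definition adelta_word :: "nat list \<Rightarrow> 'k::comm_ring_1 assoc2" where
  "adelta_word w = foldr (\<lambda>i acc. a2mul (a2gen i) acc) w a2one"

text \<open>Linear extension of Delta (for finitely supported f).\<close>
definition adelta :: "'k::comm_ring_1 assoc \<Rightarrow> 'k assoc2" where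
  "adelta f p = (\<Sum>w\<in>{w. f w \<noteq> 0}. f w * adelta_word w p)"

definition atens_one :: "'k::comm_ring_1 assoc \<Rightarrow> 'k assoc2" where
  "atens_one f p = (if snd p = [] then f (fst p) else 0)"

definition aone_tens :: "'k::comm_ring_1 assoc \<Rightarrow> 'k assoc2" where
  "aone_tens f p = (if fst p = [] then f (snd p) else 0)"

definition aprim :: "'k::comm_ring_1 assoc \<Rightarrow> bool" where
  "aprim f \<longleftrightarrow> finite {w. f w \<noteq> 0} \<and>
     adelta f = (\<lambda>p. atens_one f p + aone_tens f p)"

text \<open>Basis: the unit MOne and the nonassociative monomials (binary trees with leaves
  MX i, containing no MOne). The product of basis elements is mmul (1.a = a.1 = a).\<close>

datatype mag = MOne | MX nat | MMul mag mag

fun mmul :: "mag \<Rightarrow> mag \<Rightarrow> mag" where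
  "mmul MOne t = t"
| "mmul s MOne = s"
| "mmul s t = MMul s t"

fun no_one :: "mag \<Rightarrow> bool" where
  "no_one MOne = False"
| "no_one (MX i) = True"
| "no_one (MMul s t) = (no_one s \<and> no_one t)"

definition mnormal :: "mag \<Rightarrow> bool" where
  "mnormal t \<longleftrightarrow> t = MOne \<or> no_one t"

fun leaves :: "mag \<Rightarrow> nat list" where
  "leaves MOne = []"
| "leaves (MX i) = [i]"
| "leaves (MMul s t) = leaves s @ leaves t"

fun map_leaves :: "(nat \<Rightarrow> nat) \<Rightarrow> mag \<Rightarrow> mag" where
  "map_leaves \<sigma> MOne = MOne"
| "map_leaves \<sigma> (MX i) = MX (\<sigma> i)"
| "map_leaves \<sigma> (MMul s t) = MMul (map_leaves \<sigma> s) (map_leaves \<sigma> t)"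

type_synonym 'k magma = "mag \<Rightarrow> 'k"
type_synonym 'k magma2 = "mag \<times> mag \<Rightarrow> 'k"

text \<open>Product in the tensor square (componentwise): (a (x) b)(c (x) d) = (a.c) (x) (b.d).\<close>
definition m2mul :: "'k::comm_ring_1 magma2 \<Rightarrow> 'k magma2 \<Rightarrow> 'k magma2" where
  "m2mul F G p = (\<Sum>(a, c)\<in>{(a, c). mmul a c = fst p}. \<Sum>(b, d)\<in>{(b, d). mmul b d = snd p}.
      F (a, b) * G (c, d))"

definition m2one :: "'k::comm_ring_1 magma2" where
  "m2one p = (if p = (MOne, MOne) then 1 else 0)"

definition m2gen :: "nat \<Rightarrow> 'k::comm_ring_1 magma2" where
  "m2gen i p = (if p = (MX i, MOne) then 1 else 0) + (if p = (MOne, MX i) then 1 else 0)"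

fun mdelta_basis :: "mag \<Rightarrow> 'k::comm_ring_1 magma2" where
  "mdelta_basis MOne = m2one"
| "mdelta_basis (MX i) = m2gen i"
| "mdelta_basis (MMul s t) = m2mul (mdelta_basis s) (mdelta_basis t)"

definition mdelta :: "'k::comm_ring_1 magma \<Rightarrow> 'k magma2" where
  "mdelta g p = (\<Sum>t\<in>{t. g t \<noteq> 0}. g t * mdelta_basis t p)"

definition mtens_one :: "'k::comm_ring_1 magma \<Rightarrow> 'k magma2" where
  "mtens_one g p = (if snd p = MOne then g (fst p) else 0)"

definition mone_tens :: "'k::comm_ring_1 magma \<Rightarrow> 'k magma2" where
  "mone_tens g p = (if fst p = MOne then g (snd p) else 0)"

definition mprim :: "'k::comm_ring_1 magma \<Rightarrow> bool" where
  "mprim g \<longleftrightarrow> finite {t. g t \<noteq> 0} \<and> (\<forall>t. g t \<noteq> 0 \<longrightarrow> mnormal t) \<and>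
     mdelta g = (\<lambda>p. mtens_one g p + mone_tens g p)"

fun lnorm :: "nat list \<Rightarrow> mag" where
  "lnorm [] = MOne"
| "lnorm (i # is) = foldl (\<lambda>t j. MMul t (MX j)) (MX i) is"

fun rnorm :: "nat list \<Rightarrow> mag" where
  "rnorm [] = MOne"
| "rnorm [i] = MX i"
| "rnorm (i # j # is) = MMul (MX i) (rnorm (j # is))"

definition bracket_image :: "(nat list \<Rightarrow> mag) \<Rightarrow> 'k::comm_ring_1 assoc \<Rightarrow> 'k magma" where
  "bracket_image \<beta> f t = (\<Sum>w\<in>{w. f w \<noteq> 0}. if \<beta> w = t then f w else 0)"

inductive_set lie_polys :: "'k::comm_ring_1 assoc set" where
  gen: "(\<lambda>w. if w = [i] then 1 else 0) \<in> lie_polys"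
| add: "f \<in> lie_polys \<Longrightarrow> g \<in> lie_polys \<Longrightarrow> (\<lambda>w. f w + g w) \<in> lie_polys"
| smult: "f \<in> lie_polys \<Longrightarrow> (\<lambda>w. c * f w) \<in> lie_polys"
| bracket: "f \<in> lie_polys \<Longrightarrow> g \<in> lie_polys \<Longrightarrow> (\<lambda>w. amul f g w - amul g f w) \<in> lie_polys"

definition Lie_n :: "nat \<Rightarrow> 'k::comm_ring_1 assoc set" where
  "Lie_n n = {f \<in> lie_polys. \<forall>w. f w \<noteq> 0 \<longrightarrow> distinct w \<and> set w = {1..n}}"

definition Prim_Mag_n :: "nat \<Rightarrow> 'k::comm_ring_1 magma set" where
  "Prim_Mag_n n = {g. mprim g \<and>
     (\<forall>t. g t \<noteq> 0 \<longrightarrow> no_one t \<and> distinct (leaves t) \<and> set (leaves t) = {1..n})}"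

end

theory Submission
  imports Defs "HOL-Library.Sublist"
begin

(* A bracketing \<beta> sends the word i1...in to a nonassociative monomial with the same leaves, so it
  is injective and induces linear maps f \<mapsto> \<beta> f and \<beta> \<otimes> \<beta> on the algebras and their tensor squares.
  For the left-normed bracketing \<beta>(w j) = \<beta>(w) x_j, and both coproducts are multiplicative with 1 a
  unit in each tensor factor, so \<Delta>_a(\<beta> w) and \<Delta>(w) are built one generator at a time in the same
  way: by induction on w, \<Delta>_a(\<beta> w) = (\<beta> \<otimes> \<beta>)(\<Delta> w). Applying \<beta> \<otimes> \<beta> to \<Delta> f = f \<otimes> 1 + 1 \<otimes> f
  shows that \<beta> f is primitive. The right-normed case is the mirror image, with \<beta>(i w) = x_i \<beta>(w).
  Lie polynomials are primitive, and both maps are linear and commute with renaming the variables,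
  so they embed Lie(n) into Prim Mag(n); for n \<ge> 3 no word has equal left- and right-normed
  bracketings, so the two images intersect trivially. *)

section \<open>The tensor square of the free associative algebra\<close>

lemma sum_take_eq:
  "(\<Sum>k\<le>length w. if take k w = u then h k else 0) = (if prefix u w then h (length u) else 0)"
proof -
  have "take k w = u \<longleftrightarrow> k = length u \<and> prefix u w" if "k \<le> length w" for k
    using that by (auto simp: prefix_def min_def intro: append_take_drop_id[symmetric])
  then show ?thesis
    by (auto simp: prefix_length_le intro!: trans[OF sum.cong sum.delta])
qed

lemma sum_drop_eq:
  "(\<Sum>k\<le>length w. if drop k w = u then h k else 0) = (if suffix u w then h (length w - length u) else 0)"
proof -
  have "drop k w = u \<longleftrightarrow> k = length w - length u \<and> suffix u w" if "k \<le> length w" for k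
    using that by (auto simp: suffix_def intro: append_take_drop_id[symmetric])
  then show ?thesis
    by (auto intro!: trans[OF sum.cong sum.delta])
qed

lemma sum_prefix_take:
  "(\<Sum>k\<le>length u. if prefix [i] (take k u) then g k else 0)
   = (if prefix [i] u then (\<Sum>k\<le>length (tl u). g (Suc k)) else 0)"
  by (cases u) (simp_all add: sum.atMost_Suc_shift del: sum.atMost_Suc)

definition aunit :: "'k::comm_ring_1 assoc" where
  "aunit w = (if w = [] then 1 else 0)"

definition atensor :: "'k::comm_ring_1 assoc \<Rightarrow> 'k assoc \<Rightarrow> 'k assoc2" where
  "atensor f g p = f (fst p) * g (snd p)"

lemma amul_aunit_left [simp]: "amul aunit f = f"
  by (rule ext)
    (simp add: amul_def aunit_def if_distrib[of "\<lambda>x. x * _"] sum_take_eq del: take_eq_Nil cong: if_cong)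

lemma amul_aunit_right [simp]: "amul f aunit = f"
  by (rule ext)
    (simp add: amul_def aunit_def if_distrib[of "\<lambda>x. _ * x"] sum_drop_eq del: drop_eq_Nil cong: if_cong)

lemma atens_one_eq_atensor: "atens_one f = atensor f aunit"
  by (auto simp: atens_one_def atensor_def aunit_def)

lemma aone_tens_eq_atensor: "aone_tens f = atensor aunit f"
  by (auto simp: aone_tens_def atensor_def aunit_def)

lemma a2mul_atensor: "a2mul (atensor f g) (atensor f' g') = atensor (amul f f') (amul g g')"
  by (auto simp: a2mul_def atensor_def amul_def sum_product mult_ac)

lemma a2mul_add_left: "a2mul (\<lambda>p. F p + G p) H = (\<lambda>p. a2mul F H p + a2mul G H p)"
  by (simp add: fun_eq_iff a2mul_def distrib_right sum.distrib)

lemma a2mul_add_right: "a2mul H (\<lambda>p. F p + G p) = (\<lambda>p. a2mul H F p + a2mul H G p)"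
  by (simp add: fun_eq_iff a2mul_def distrib_left sum.distrib)

lemma a2one_eq_atensor: "a2one = atensor aunit aunit"
  by (auto simp: a2one_def atensor_def aunit_def)

lemma a2mul_one_left: "a2mul a2one F = F"
proof
  fix p :: "nat list \<times> nat list"
  have "a2mul a2one F p = (\<Sum>k\<le>length (fst p). if take k (fst p) = [] then
      (\<Sum>l\<le>length (snd p). if take l (snd p) = [] then F (drop k (fst p), drop l (snd p)) else 0) else 0)"
    by (auto simp: a2mul_def a2one_eq_atensor atensor_def aunit_def simp del: take_eq_Nil intro!: sum.cong)
  then show "a2mul a2one F p = F p"
    by (simp add: sum_take_eq del: take_eq_Nil)
qed

lemma a2mul_one_right: "a2mul F a2one = F"
proof
  fix p :: "nat list \<times> nat list"
  have "a2mul F a2one p = (\<Sum>k\<le>length (fst p). if drop k (fst p) = [] then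
      (\<Sum>l\<le>length (snd p). if drop l (snd p) = [] then F (take k (fst p), take l (snd p)) else 0) else 0)"
    by (auto simp: a2mul_def a2one_eq_atensor atensor_def aunit_def simp del: drop_eq_Nil intro!: sum.cong)
  then show "a2mul F a2one p = F p"
    by (simp add: sum_drop_eq del: drop_eq_Nil)
qed

lemma a2mul_gen_left:
  "a2mul (a2gen i) F (u, v) =
    (if prefix [i] u then F (tl u, v) else 0) + (if prefix [i] v then F (u, tl v) else 0)"
proof -
  have "a2mul (a2gen i) F (u, v) =
      (\<Sum>k\<le>length u. if take k u = [i] then
        (\<Sum>l\<le>length v. if take l v = [] then F (drop k u, drop l v) else 0) else 0)
    + (\<Sum>k\<le>length u. if take k u = [] then
        (\<Sum>l\<le>length v. if take l v = [i] then F (drop k u, drop l v) else 0) else 0)"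
    by (auto simp: a2mul_def a2gen_def distrib_right sum.distrib[symmetric] simp del: take_eq_Nil intro!: sum.cong)
  then show ?thesis
    by (simp add: sum_take_eq drop_Suc del: take_eq_Nil)
qed

lemma a2mul_gen_right:
  "a2mul F (a2gen j) (u, v) =
    (if suffix [j] u then F (butlast u, v) else 0) + (if suffix [j] v then F (u, butlast v) else 0)"
proof -
  have "a2mul F (a2gen j) (u, v) =
      (\<Sum>k\<le>length u. if drop k u = [j] then
        (\<Sum>l\<le>length v. if drop l v = [] then F (take k u, take l v) else 0) else 0)
    + (\<Sum>k\<le>length u. if drop k u = [] then
        (\<Sum>l\<le>length v. if drop l v = [j] then F (take k u, take l v) else 0) else 0)"
    by (auto simp: a2mul_def a2gen_def distrib_left sum.distrib[symmetric] simp del: drop_eq_Nil intro!: sum.cong)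
  then show ?thesis
    by (simp add: sum_drop_eq butlast_conv_take del: drop_eq_Nil)
qed

lemma a2mul_gen_assoc: "a2mul (a2gen i) (a2mul F G) = a2mul (a2mul (a2gen i) F) G"
proof
  fix p :: "nat list \<times> nat list"
  obtain u v where p: "p = (u, v)" by fastforce
  have "a2mul (a2mul (a2gen i) F) G (u, v) =
      (\<Sum>k\<le>length u. if prefix [i] (take k u) then
        (\<Sum>l\<le>length v. F (tl (take k u), take l v) * G (drop k u, drop l v)) else 0)
    + (\<Sum>l\<le>length v. if prefix [i] (take l v) then
        (\<Sum>k\<le>length u. F (take k u, tl (take l v)) * G (drop k u, drop l v)) else 0)"
    unfolding a2mul_def[of "a2mul _ _"] a2mul_gen_left distrib_right sum.distrib
    by (subst (2) sum.swap) (auto intro!: arg_cong2[where f = "(+)"] sum.cong)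
  also have "\<dots> = a2mul (a2gen i) (a2mul F G) (u, v)"
    by (simp add: sum_prefix_take a2mul_gen_left a2mul_def[of F G] tl_take drop_Suc
        sum.swap[where A = "{..length v - Suc 0}"])
  finally show "a2mul (a2gen i) (a2mul F G) p = a2mul (a2mul (a2gen i) F) G p"
    by (simp add: p)
qed

section \<open>Lie polynomials are primitive\<close>

lemma adelta_word_Nil [simp]: "adelta_word [] = a2one"
  by (simp add: adelta_word_def)

lemma adelta_word_Cons [simp]: "adelta_word (i # w) = a2mul (a2gen i) (adelta_word w)"
  by (simp add: adelta_word_def)

lemma adelta_word_append: "adelta_word (u @ v) = a2mul (adelta_word u) (adelta_word v)"
  by (induction u) (simp_all add: a2mul_one_left a2mul_gen_assoc)

lemma adelta_word_snoc: "adelta_word (w @ [j]) = a2mul (adelta_word w) (a2gen j)"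
  by (simp add: adelta_word_append a2mul_one_right)

lemma adelta_eq_sum:
  assumes "finite S" "{w. f w \<noteq> 0} \<subseteq> S"
  shows "adelta f p = (\<Sum>w\<in>S. f w * adelta_word w p)"
  unfolding adelta_def using assms by (intro sum.mono_neutral_left) auto

lemma adelta_lincomb:
  assumes "finite {w. f w \<noteq> 0}" "finite {w. g w \<noteq> 0}"
  shows "adelta (\<lambda>w. c * f w + d * g w) p = c * adelta f p + d * adelta g p"
proof -
  let ?S = "{w. f w \<noteq> 0} \<union> {w. g w \<noteq> 0}"
  have S: "finite ?S" using assms by simp
  have "adelta (\<lambda>w. c * f w + d * g w) p = (\<Sum>w\<in>?S. (c * f w + d * g w) * adelta_word w p)"
    using S by (rule adelta_eq_sum) auto
  also have "\<dots> = c * (\<Sum>w\<in>?S. f w * adelta_word w p) + d * (\<Sum>w\<in>?S. g w * adelta_word w p)"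
    by (simp add: sum.distrib sum_distrib_left algebra_simps)
  also have "\<dots> = c * adelta f p + d * adelta g p"
    using S by (simp add: adelta_eq_sum[where S = ?S])
  finally show ?thesis .
qed

lemma a2mul_sum:
  "a2mul (\<lambda>p. \<Sum>x\<in>A. F x p) (\<lambda>p. \<Sum>y\<in>B. G y p) p = (\<Sum>x\<in>A. \<Sum>y\<in>B. a2mul (F x) (G y) p)"
  unfolding a2mul_def sum_product sum.cartesian_product
  by (rule sum.reindex_bij_witness[where i = "\<lambda>(x, y, k, l). (k, l, x, y)" and j = "\<lambda>(k, l, x, y). (x, y, k, l)"])
    auto

lemma amul_eq_sum_splits:
  assumes "finite A" "{w. f w \<noteq> 0} \<subseteq> A" "finite B" "{w. g w \<noteq> 0} \<subseteq> B"
  shows "amul f g w = (\<Sum>(x, y)\<in>{(x, y) \<in> A \<times> B. x @ y = w}. f x * g y)"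
proof -
  have bij: "bij_betw (\<lambda>k. (take k w, drop k w)) {..length w} {(x, y). x @ y = w}"
    by (rule bij_betwI[where g = "\<lambda>(x, y). length x"]) auto
  then have "amul f g w = (\<Sum>(x, y)\<in>{(x, y). x @ y = w}. f x * g y)"
    unfolding amul_def by (subst sum.reindex_bij_betw[symmetric]) auto
  also have "\<dots> = (\<Sum>(x, y)\<in>{(x, y) \<in> A \<times> B. x @ y = w}. f x * g y)"
    using assms bij_betw_finite[OF bij] by (intro sum.mono_neutral_right) auto
  finally show ?thesis .
qed

lemma support_amul:
  "{w. amul f g w \<noteq> 0} \<subseteq> (\<lambda>(x, y). x @ y) ` ({w. f w \<noteq> 0} \<times> {w. g w \<noteq> 0})"
proof
  fix w assume "w \<in> {w. amul f g w \<noteq> 0}"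
  then obtain k where "f (take k w) * g (drop k w) \<noteq> 0"
    unfolding amul_def by (meson mem_Collect_eq sum.not_neutral_contains_not_neutral)
  then show "w \<in> (\<lambda>(x, y). x @ y) ` ({w. f w \<noteq> 0} \<times> {w. g w \<noteq> 0})"
    by (intro image_eqI[of _ _ "(take k w, drop k w)"]) auto
qed

lemma a2mul_scale: "a2mul (\<lambda>p. c * F p) (\<lambda>p. d * G p) p = c * d * a2mul F G p"
  by (simp add: a2mul_def sum_distrib_left mult_ac)

lemma adelta_amul:
  assumes "finite {w. f w \<noteq> 0}" "finite {w. g w \<noteq> 0}"
  shows "adelta (amul f g) p = a2mul (adelta f) (adelta g) p"
proof -
  define A where "A = {w. f w \<noteq> 0}"
  define B where "B = {w. g w \<noteq> 0}"
  let ?cat = "\<lambda>(x, y). x @ y"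
  have A: "finite A" and B: "finite B" using assms by (simp_all add: A_def B_def)
  have amul: "amul f g w = (\<Sum>(x, y)\<in>{(x, y) \<in> A \<times> B. x @ y = w}. f x * g y)" for w
    by (rule amul_eq_sum_splits) (use assms in \<open>simp_all add: A_def B_def\<close>)
  have "adelta (amul f g) p = (\<Sum>w\<in>?cat ` (A \<times> B). amul f g w * adelta_word w p)"
    using A B support_amul[of f g] by (intro adelta_eq_sum) (auto simp: A_def B_def)
  also have "\<dots> = (\<Sum>w\<in>?cat ` (A \<times> B). \<Sum>q\<in>{q \<in> A \<times> B. ?cat q = w}.
      f (fst q) * g (snd q) * adelta_word (?cat q) p)"
    by (auto simp: amul sum_distrib_right intro!: sum.cong)
  also have "\<dots> = (\<Sum>(x, y)\<in>A \<times> B. f x * g y * adelta_word (x @ y) p)"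
    using A B by (subst sum.group) (auto simp: split_def)
  also have "\<dots> = (\<Sum>x\<in>A. \<Sum>y\<in>B. a2mul (\<lambda>p. f x * adelta_word x p) (\<lambda>p. g y * adelta_word y p) p)"
    by (simp add: sum.cartesian_product a2mul_scale adelta_word_append)
  also have "\<dots> = a2mul (adelta f) (adelta g) p"
  proof -
    have "adelta f = (\<lambda>p. \<Sum>x\<in>A. f x * adelta_word x p)" "adelta g = (\<lambda>p. \<Sum>y\<in>B. g y * adelta_word y p)"
      using A B by (auto intro!: adelta_eq_sum simp: A_def B_def)
    then show ?thesis by (simp only: a2mul_sum)
  qed
  finally show ?thesis .
qed

lemma aprim_iff_atensor:
  "aprim f \<longleftrightarrow> finite {w. f w \<noteq> 0} \<and> adelta f = (\<lambda>p. atensor f aunit p + atensor aunit f p)"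
  by (simp add: aprim_def atens_one_eq_atensor aone_tens_eq_atensor)

lemma aprim_lie_polys:
  fixes f :: "'k::comm_ring_1 assoc"
  shows "f \<in> lie_polys \<Longrightarrow> aprim f"
proof (induction rule: lie_polys.induct)
  case (gen i)
  let ?x = "\<lambda>w. if w = [i] then 1 else 0 :: 'k"
  have "{w. ?x w \<noteq> 0} = {[i]}" by auto
  then have "adelta ?x = a2gen i"
    by (simp add: fun_eq_iff adelta_def a2mul_one_right)
  then show ?case
    by (auto simp: aprim_def fun_eq_iff a2gen_def atens_one_def aone_tens_def)
next
  case (add f g)
  then have "finite {w. f w \<noteq> 0}" "finite {w. g w \<noteq> 0}"
    by (simp_all add: aprim_def)
  with add.IH show ?case
    using adelta_lincomb[of f g 1 1]
    by (auto simp: aprim_iff_atensor atensor_def algebra_simps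
        intro: finite_subset[of _ "{w. f w \<noteq> 0} \<union> {w. g w \<noteq> 0}"])
next
  case (smult f c)
  then have "finite {w. f w \<noteq> 0}"
    by (simp add: aprim_def)
  with smult.IH show ?case
    using adelta_lincomb[of f f c 0]
    by (auto simp: aprim_iff_atensor atensor_def algebra_simps intro: finite_subset[of _ "{w. f w \<noteq> 0}"])
next
  case (bracket f g)
  let ?h = "\<lambda>w. amul f g w - amul g f w"
  have fin: "finite {w. f w \<noteq> 0}" "finite {w. g w \<noteq> 0}"
    and \<Delta>f: "adelta f = (\<lambda>p. atensor f aunit p + atensor aunit f p)"
    and \<Delta>g: "adelta g = (\<lambda>p. atensor g aunit p + atensor aunit g p)"
    using bracket.IH by (simp_all add: aprim_iff_atensor)
  have fin_amul: "finite {w. amul f g w \<noteq> 0}" "finite {w. amul g f w \<noteq> 0}"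
    using fin by (auto intro: finite_subset[OF support_amul])
  then have "finite {w. ?h w \<noteq> 0}"
    by (auto intro: finite_subset[of _ "{w. amul f g w \<noteq> 0} \<union> {w. amul g f w \<noteq> 0}"])
  moreover have "adelta ?h p = a2mul (adelta f) (adelta g) p - a2mul (adelta g) (adelta f) p" for p
    using adelta_lincomb[OF fin_amul, of 1 "-1" p] by (simp add: adelta_amul fin)
  \<comment> \<open>the cross terms f \<otimes> g + g \<otimes> f of both products are equal and cancel\<close>
  then have "adelta ?h = (\<lambda>p. atensor ?h aunit p + atensor aunit ?h p)"
    unfolding \<Delta>f \<Delta>g a2mul_add_left a2mul_add_right a2mul_atensor
    by (simp add: fun_eq_iff atensor_def algebra_simps)
  ultimately show ?case
    by (simp add: aprim_iff_atensor)
qed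

lemma finite_support_Lie_n: "f \<in> Lie_n n \<Longrightarrow> finite {w. f w \<noteq> 0}"
  using aprim_lie_polys by (auto simp: Lie_n_def aprim_def)

lemma length_Lie_n:
  assumes "f \<in> Lie_n n" "f w \<noteq> 0"
  shows "length w = n"
proof -
  have "distinct w" "set w = {1..n}"
    using assms by (auto simp: Lie_n_def)
  then show ?thesis
    using distinct_card[of w] by simp
qed

section \<open>The tensor square of the free magma algebra\<close>

lemma mmul_MOne_right [simp]: "mmul a MOne = a"
  by (cases a) auto

lemma mmul_eq: "mmul a c = (if a = MOne then c else if c = MOne then a else MMul a c)"
  by (cases a; cases c) auto

lemma finite_mmul_fibre: "finite {(a, c). mmul a c = s}"
proof (rule finite_subset)
  show "{(a, c). mmul a c = s} \<subseteq> {(MOne, s), (s, MOne)} \<union> (case s of MMul x y \<Rightarrow> {(x, y)} | _ \<Rightarrow> {})"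
    by (auto simp: mmul_eq split: if_splits)
qed (cases s; simp)

lemma finite_mmul_fibre_fst: "finite {a. mmul a c = s}"
  by (rule finite_subset[OF _ finite_imageI[OF finite_mmul_fibre[of s], of fst]]) force

lemma finite_mmul_fibre_snd: "finite {c. mmul a c = s}"
  by (rule finite_subset[OF _ finite_imageI[OF finite_mmul_fibre[of s], of snd]]) force

lemma sum_mmul_fibre_snd:
  "(\<Sum>(a, c) | mmul a c = s. if c = x then h a else 0) = (\<Sum>a | mmul a x = s. h a)"
proof -
  have "(\<Sum>(a, c) | mmul a c = s. if c = x then h a else 0) = (\<Sum>(a, c) | mmul a c = s \<and> c = x. h a)"
    using finite_mmul_fibre by (intro sum.mono_neutral_cong_right) (auto split: if_splits)
  also have "{(a, c). mmul a c = s \<and> c = x} = (\<lambda>a. (a, x)) ` {a. mmul a x = s}"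
    by auto
  finally show ?thesis
    by (simp add: sum.reindex inj_on_def)
qed

lemma sum_mmul_fibre_fst:
  "(\<Sum>(a, c) | mmul a c = s. if a = x then h c else 0) = (\<Sum>c | mmul x c = s. h c)"
proof -
  have "(\<Sum>(a, c) | mmul a c = s. if a = x then h c else 0) = (\<Sum>(a, c) | mmul a c = s \<and> a = x. h c)"
    using finite_mmul_fibre by (intro sum.mono_neutral_cong_right) (auto split: if_splits)
  also have "{(a, c). mmul a c = s \<and> a = x} = (\<lambda>c. (x, c)) ` {c. mmul x c = s}"
    by auto
  finally show ?thesis
    by (simp add: sum.reindex inj_on_def)
qed

lemma m2mul_gen_right:
  "m2mul F (m2gen j) (s, t) = (\<Sum>a | mmul a (MX j) = s. F (a, t)) + (\<Sum>b | mmul b (MX j) = t. F (s, b))"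
proof -
  have "m2mul F (m2gen j) (s, t) =
      (\<Sum>(a, c) | mmul a c = s. if c = MX j then (\<Sum>(b, d) | mmul b d = t. if d = MOne then F (a, b) else 0) else 0)
    + (\<Sum>(a, c) | mmul a c = s. if c = MOne then (\<Sum>(b, d) | mmul b d = t. if d = MX j then F (a, b) else 0) else 0)"
    by (auto simp: m2mul_def m2gen_def distrib_left sum.distrib[symmetric] split_def intro!: sum.cong)
  then show ?thesis
    by (simp add: sum_mmul_fibre_snd)
qed

lemma m2mul_gen_left:
  "m2mul (m2gen i) F (s, t) = (\<Sum>c | mmul (MX i) c = s. F (c, t)) + (\<Sum>d | mmul (MX i) d = t. F (s, d))"
proof -
  have "m2mul (m2gen i) F (s, t) =
      (\<Sum>(a, c) | mmul a c = s. if a = MX i then (\<Sum>(b, d) | mmul b d = t. if b = MOne then F (c, d) else 0) else 0)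
    + (\<Sum>(a, c) | mmul a c = s. if a = MOne then (\<Sum>(b, d) | mmul b d = t. if b = MX i then F (c, d) else 0) else 0)"
    by (auto simp: m2mul_def m2gen_def distrib_right sum.distrib[symmetric] split_def intro!: sum.cong)
  then show ?thesis
    by (simp add: sum_mmul_fibre_fst)
qed

section \<open>Bracketings\<close>

lemma leaves_map_leaves: "leaves (map_leaves \<sigma> t) = map \<sigma> (leaves t)"
  by (induction t) auto

lemma map_leaves_inject:
  assumes "inj \<sigma>"
  shows "map_leaves \<sigma> s = map_leaves \<sigma> t \<longleftrightarrow> s = t"
proof (induction s arbitrary: t)
  case MOne
  then show ?case by (cases t) auto
next
  case (MX i)
  then show ?case using assms by (cases t) (auto dest: injD)
next
  case (MMul s1 s2)
  then show ?case by (cases t) auto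
qed

text \<open>The map \<beta> \<otimes> \<beta>; a pair (s, t) has at most one preimage since leaves is left inverse to \<beta>.\<close>

definition bracket_image2 :: "(nat list \<Rightarrow> mag) \<Rightarrow> 'k::comm_ring_1 assoc2 \<Rightarrow> 'k magma2" where
  "bracket_image2 \<beta> F =
    (\<lambda>(s, t). if \<beta> (leaves s) = s \<and> \<beta> (leaves t) = t then F (leaves s, leaves t) else 0)"

locale bracketing =
  fixes \<beta> :: "nat list \<Rightarrow> mag"
  assumes leaves_bracket [simp]: "leaves (\<beta> w) = w"
    and bracket_Nil [simp]: "\<beta> [] = MOne"
    and bracket_single [simp]: "\<beta> [i] = MX i"
    and no_one_bracket: "w \<noteq> [] \<Longrightarrow> no_one (\<beta> w)"
    and bracket_map: "\<beta> (map \<sigma> w) = map_leaves \<sigma> (\<beta> w)"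
begin

lemma bracket_inject [simp]: "\<beta> u = \<beta> v \<longleftrightarrow> u = v"
  by (metis leaves_bracket)

lemma bracket_eq_MOne_iff [simp]: "\<beta> u = MOne \<longleftrightarrow> u = []"
  using bracket_inject[of u "[]"] by (simp del: bracket_inject)

lemma bracket_eq_MX_iff [simp]: "\<beta> u = MX i \<longleftrightarrow> u = [i]"
  using bracket_inject[of u "[i]"] by (simp del: bracket_inject)

lemma bracket_image2_a2one: "bracket_image2 \<beta> a2one = m2one"
  by (auto simp: fun_eq_iff bracket_image2_def a2one_def m2one_def)

lemma bracket_image2_a2gen: "bracket_image2 \<beta> (a2gen i) = m2gen i"
  by (auto simp: fun_eq_iff bracket_image2_def a2gen_def m2gen_def)

lemma sum_mmul_fibre_right_bracket:
  assumes bracket_snoc: "\<And>u. mmul (\<beta> u) (MX j) = \<beta> (u @ [j])"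
    and h: "\<And>a. \<beta> (leaves a) \<noteq> a \<Longrightarrow> h a = 0"
  shows "(\<Sum>a | mmul a (MX j) = s. h a)
    = (if \<beta> (leaves s) = s \<and> suffix [j] (leaves s) then h (\<beta> (butlast (leaves s))) else 0)"
proof -
  have left_factor: "a = \<beta> (butlast (leaves s)) \<and> \<beta> (leaves s) = s \<and> suffix [j] (leaves s)"
    if "mmul a (MX j) = s" "h a \<noteq> 0" for a
  proof -
    have "\<beta> (leaves a) = a"
      using h that(2) by blast
    moreover from this have "s = \<beta> (leaves a @ [j])"
      using that(1) bracket_snoc[of "leaves a"] by simp
    ultimately show ?thesis
      by (simp add: suffix_def)
  qed
  show ?thesis
  proof (cases "\<beta> (leaves s) = s \<and> suffix [j] (leaves s)")
    case True
    then have "mmul (\<beta> (butlast (leaves s))) (MX j) = s"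
      by (auto simp: bracket_snoc suffix_def)
    then have "(\<Sum>a | mmul a (MX j) = s. h a) = (\<Sum>a\<in>{\<beta> (butlast (leaves s))}. h a)"
      using left_factor finite_mmul_fibre_fst by (intro sum.mono_neutral_right) auto
    with True show ?thesis
      by simp
  qed (use left_factor in \<open>auto intro!: sum.neutral\<close>)
qed

lemma sum_mmul_fibre_left_bracket:
  assumes bracket_Cons: "\<And>u. mmul (MX i) (\<beta> u) = \<beta> (i # u)"
    and h: "\<And>c. \<beta> (leaves c) \<noteq> c \<Longrightarrow> h c = 0"
  shows "(\<Sum>c | mmul (MX i) c = s. h c)
    = (if \<beta> (leaves s) = s \<and> prefix [i] (leaves s) then h (\<beta> (tl (leaves s))) else 0)"
proof -
  have right_factor: "c = \<beta> (tl (leaves s)) \<and> \<beta> (leaves s) = s \<and> prefix [i] (leaves s)"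
    if "mmul (MX i) c = s" "h c \<noteq> 0" for c
  proof -
    have "\<beta> (leaves c) = c"
      using h that(2) by blast
    moreover from this have "s = \<beta> (i # leaves c)"
      using that(1) bracket_Cons[of "leaves c"] by simp
    ultimately show ?thesis
      by simp
  qed
  show ?thesis
  proof (cases "\<beta> (leaves s) = s \<and> prefix [i] (leaves s)")
    case True
    then have "mmul (MX i) (\<beta> (tl (leaves s))) = s"
      by (auto simp: bracket_Cons prefix_def)
    then have "(\<Sum>c | mmul (MX i) c = s. h c) = (\<Sum>c\<in>{\<beta> (tl (leaves s))}. h c)"
      using right_factor finite_mmul_fibre_snd by (intro sum.mono_neutral_right) auto
    with True show ?thesis
      by simp
  qed (use right_factor in \<open>auto intro!: sum.neutral\<close>)
qed

lemma m2mul_bracket_image2_gen: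
  assumes "\<And>u. mmul (\<beta> u) (MX j) = \<beta> (u @ [j])"
  shows "m2mul (bracket_image2 \<beta> F) (m2gen j) = bracket_image2 \<beta> (a2mul F (a2gen j))"
proof -
  have "m2mul (bracket_image2 \<beta> F) (m2gen j) (s, t) = bracket_image2 \<beta> (a2mul F (a2gen j)) (s, t)" for s t
    unfolding m2mul_gen_right
    by (subst (1 2) sum_mmul_fibre_right_bracket[OF assms])
       (auto simp: bracket_image2_def a2mul_gen_right)
  then show ?thesis
    by (simp add: fun_eq_iff)
qed

lemma m2mul_gen_bracket_image2:
  assumes "\<And>u. mmul (MX i) (\<beta> u) = \<beta> (i # u)"
  shows "m2mul (m2gen i) (bracket_image2 \<beta> F) = bracket_image2 \<beta> (a2mul (a2gen i) F)"
proof -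
  have "m2mul (m2gen i) (bracket_image2 \<beta> F) (s, t) = bracket_image2 \<beta> (a2mul (a2gen i) F) (s, t)" for s t
    unfolding m2mul_gen_left
    by (subst (1 2) sum_mmul_fibre_left_bracket[OF assms])
       (auto simp: bracket_image2_def a2mul_gen_left)
  then show ?thesis
    by (simp add: fun_eq_iff)
qed

lemma mdelta_basis_bracket_snoc:
  assumes bracket_snoc: "\<And>u j. mmul (\<beta> u) (MX j) = \<beta> (u @ [j])"
  shows "mdelta_basis (\<beta> w) = bracket_image2 \<beta> (adelta_word w)"
proof (induction w rule: rev_induct)
  case Nil
  then show ?case by (simp add: bracket_image2_a2one)
next
  case (snoc j w)
  show ?case
  proof (cases "w = []")
    case True
    then show ?thesis by (simp add: bracket_image2_a2gen a2mul_one_right)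
  next
    case False
    then have "\<beta> (w @ [j]) = MMul (\<beta> w) (MX j)"
      by (simp add: bracket_snoc[symmetric] mmul_eq)
    with snoc.IH show ?thesis
      by (simp add: adelta_word_snoc m2mul_bracket_image2_gen bracket_snoc)
  qed
qed

lemma mdelta_basis_bracket_Cons:
  assumes bracket_Cons: "\<And>u i. mmul (MX i) (\<beta> u) = \<beta> (i # u)"
  shows "mdelta_basis (\<beta> w) = bracket_image2 \<beta> (adelta_word w)"
proof (induction w)
  case Nil
  then show ?case by (simp add: bracket_image2_a2one)
next
  case (Cons i w)
  show ?case
  proof (cases "w = []")
    case True
    then show ?thesis by (simp add: bracket_image2_a2gen a2mul_one_right)
  next
    case False
    then have "\<beta> (i # w) = MMul (MX i) (\<beta> w)"
      by (simp add: bracket_Cons[symmetric] mmul_eq)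
    with Cons.IH show ?thesis
      by (simp add: m2mul_gen_bracket_image2 bracket_Cons)
  qed
qed

lemma bracket_image_eq:
  assumes "finite {w. f w \<noteq> 0}"
  shows "bracket_image \<beta> f t = (if \<beta> (leaves t) = t then f (leaves t) else 0)"
proof -
  have "bracket_image \<beta> f t = (\<Sum>w | f w \<noteq> 0. if w = leaves t then (if \<beta> w = t then f w else 0) else 0)"
    unfolding bracket_image_def by (intro sum.cong) auto
  with assms show ?thesis
    by (simp add: sum.delta')
qed

lemma support_bracket_image:
  assumes "finite {w. f w \<noteq> 0}"
  shows "{t. bracket_image \<beta> f t \<noteq> 0} = \<beta> ` {w. f w \<noteq> 0}"
proof -
  have "t \<in> \<beta> ` A \<longleftrightarrow> \<beta> (leaves t) = t \<and> leaves t \<in> A" for t A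
    by (auto intro: image_eqI[of _ _ "leaves t"])
  with assms show ?thesis
    by (auto simp: bracket_image_eq)
qed

lemma mnormal_bracket: "mnormal (\<beta> w)"
  by (cases "w = []") (simp_all add: mnormal_def no_one_bracket)

lemma bracket_image_nonzeroD:
  assumes "finite {w. f w \<noteq> 0}" "bracket_image \<beta> f t \<noteq> 0"
  shows "mnormal t" "f (leaves t) \<noteq> 0"
  using assms mnormal_bracket[of "leaves t"] by (auto simp: bracket_image_eq split: if_splits)

lemma mdelta_bracket_image:
  fixes f :: "'k::comm_ring_1 assoc"
  assumes intertwine: "\<And>w. mdelta_basis (\<beta> w) = (bracket_image2 \<beta> (adelta_word w) :: 'k magma2)"
    and fin: "finite {w. f w \<noteq> 0}"
  shows "mdelta (bracket_image \<beta> f) = bracket_image2 \<beta> (adelta f)"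
proof
  fix p :: "mag \<times> mag"
  have "mdelta (bracket_image \<beta> f) p = (\<Sum>w | f w \<noteq> 0. f w * mdelta_basis (\<beta> w) p)"
    unfolding mdelta_def support_bracket_image[OF fin] using fin
    by (simp add: sum.reindex inj_on_def bracket_image_eq)
  also have "\<dots> = bracket_image2 \<beta> (adelta f) p"
    by (cases p) (auto simp: intertwine adelta_def bracket_image2_def)
  finally show "mdelta (bracket_image \<beta> f) p = bracket_image2 \<beta> (adelta f) p" .
qed

lemma bracket_image2_primitive:
  assumes "finite {w. f w \<noteq> 0}"
  shows "bracket_image2 \<beta> (\<lambda>p. atens_one f p + aone_tens f p)
    = (\<lambda>p. mtens_one (bracket_image \<beta> f) p + mone_tens (bracket_image \<beta> f) p)"
  using assms by (auto simp: fun_eq_iff bracket_image2_def atens_one_def aone_tens_def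
      mtens_one_def mone_tens_def bracket_image_eq)

lemma mprim_bracket_image:
  fixes f :: "'k::comm_ring_1 assoc"
  assumes "\<And>w. mdelta_basis (\<beta> w) = (bracket_image2 \<beta> (adelta_word w) :: 'k magma2)"
    and "aprim f"
  shows "mprim (bracket_image \<beta> f)"
proof -
  have fin: "finite {w. f w \<noteq> 0}" and "adelta f = (\<lambda>p. atens_one f p + aone_tens f p)"
    using assms(2) by (simp_all add: aprim_def)
  then show ?thesis
    unfolding mprim_def using assms(1)
    by (simp add: support_bracket_image mdelta_bracket_image bracket_image2_primitive bracket_image_nonzeroD)
qed

lemma bracket_image_lincomb:
  assumes "finite {w. f w \<noteq> 0}" "finite {w. g w \<noteq> 0}"
  shows "bracket_image \<beta> (\<lambda>w. c * f w + g w) = (\<lambda>t. c * bracket_image \<beta> f t + bracket_image \<beta> g t)"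
proof -
  have "finite {w. c * f w + g w \<noteq> 0}"
    using assms by (auto intro: finite_subset[of _ "{w. f w \<noteq> 0} \<union> {w. g w \<noteq> 0}"])
  with assms show ?thesis
    by (simp add: fun_eq_iff bracket_image_eq)
qed

lemma bracket_image_permute:
  assumes "inj \<sigma>" "finite {w. f w \<noteq> 0}"
  shows "bracket_image \<beta> (\<lambda>w. f (map \<sigma> w)) = (\<lambda>t. bracket_image \<beta> f (map_leaves \<sigma> t))"
proof -
  have "{w. f (map \<sigma> w) \<noteq> 0} = map \<sigma> -` {w. f w \<noteq> 0}"
    by auto
  then have "finite {w. f (map \<sigma> w) \<noteq> 0}"
    using finite_vimageI[OF assms(2) inj_mapI[OF assms(1)]] by simp
  moreover have "\<beta> (map \<sigma> (leaves t)) = map_leaves \<sigma> t \<longleftrightarrow> \<beta> (leaves t) = t" for t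
    by (simp add: bracket_map map_leaves_inject[OF assms(1)])
  ultimately show ?thesis
    using assms by (simp add: fun_eq_iff bracket_image_eq leaves_map_leaves)
qed

lemma bracket_image_Prim_Mag_n:
  fixes f :: "'k::comm_ring_1 assoc"
  assumes "\<And>w. mdelta_basis (\<beta> w) = (bracket_image2 \<beta> (adelta_word w) :: 'k magma2)"
    and f: "f \<in> Lie_n n" and "1 \<le> n"
  shows "bracket_image \<beta> f \<in> Prim_Mag_n n"
proof -
  have fin: "finite {w. f w \<noteq> 0}"
    using f by (rule finite_support_Lie_n)
  have "no_one t \<and> distinct (leaves t) \<and> set (leaves t) = {1..n}" if "bracket_image \<beta> f t \<noteq> 0" for t
  proof -
    have "mnormal t" "f (leaves t) \<noteq> 0"
      using fin that by (rule bracket_image_nonzeroD)+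
    moreover have "distinct (leaves t) \<and> set (leaves t) = {1..n}"
      using f \<open>f (leaves t) \<noteq> 0\<close> by (simp add: Lie_n_def)
    ultimately show ?thesis
      using \<open>1 \<le> n\<close> by (auto simp: mnormal_def)
  qed
  moreover have "mprim (bracket_image \<beta> f)"
    using assms(1) f aprim_lie_polys by (intro mprim_bracket_image) (auto simp: Lie_n_def)
  ultimately show ?thesis
    by (simp add: Prim_Mag_n_def)
qed

end

lemma lnorm_snoc: "lnorm (w @ [j]) = (if w = [] then MX j else MMul (lnorm w) (MX j))"
  by (cases w) auto

lemma rnorm_Cons: "rnorm (i # w) = (if w = [] then MX i else MMul (MX i) (rnorm w))"
  by (cases w) auto

interpretation lnorm: bracketing lnorm
proof
  show "leaves (lnorm w) = w" for w
    by (induction w rule: rev_induct) (simp_all add: lnorm_snoc)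
  show "w \<noteq> [] \<Longrightarrow> no_one (lnorm w)" for w
    by (induction w rule: rev_induct) (auto simp: lnorm_snoc)
  show "lnorm (map \<sigma> w) = map_leaves \<sigma> (lnorm w)" for \<sigma> w
    by (induction w rule: rev_induct) (simp_all add: lnorm_snoc)
qed simp_all

interpretation rnorm: bracketing rnorm
proof
  show "leaves (rnorm w) = w" for w
    by (induction w) (simp_all add: rnorm_Cons)
  show "w \<noteq> [] \<Longrightarrow> no_one (rnorm w)" for w
    by (induction w) (auto simp: rnorm_Cons)
  show "rnorm (map \<sigma> w) = map_leaves \<sigma> (rnorm w)" for \<sigma> w
    by (induction w) (simp_all add: rnorm_Cons)
qed simp_all

lemma mdelta_basis_lnorm: "mdelta_basis (lnorm w) = bracket_image2 lnorm (adelta_word w)"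
  by (rule lnorm.mdelta_basis_bracket_snoc) (simp add: lnorm_snoc mmul_eq)

lemma mdelta_basis_rnorm: "mdelta_basis (rnorm w) = bracket_image2 rnorm (adelta_word w)"
  by (rule rnorm.mdelta_basis_bracket_Cons) (simp add: rnorm_Cons mmul_eq)

lemma lnorm_neq_rnorm: "3 \<le> length w \<Longrightarrow> lnorm w \<noteq> rnorm w"
proof
  assume "3 \<le> length w" and eq: "lnorm w = rnorm w"
  then obtain i v where w: "w = i # v" and "2 \<le> length v"
    by (cases w) auto
  moreover obtain u j where v: "v = u @ [j]"
    using \<open>2 \<le> length v\<close> by (cases v rule: rev_cases) auto
  ultimately have "u \<noteq> []"
    by auto
  have "lnorm w = MMul (lnorm (i # u)) (MX j)" and "rnorm w = MMul (MX i) (rnorm v)"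
    using w v \<open>u \<noteq> []\<close> by (simp_all add: rnorm_Cons)
  with eq have "lnorm (i # u) = MX i"
    by simp
  then have "i # u = [i]"
    by (rule lnorm.bracket_eq_MX_iff[THEN iffD1])
  with \<open>u \<noteq> []\<close> show False
    by simp
qed

lemma bracket_images_independent:
  assumes "3 \<le> n" "f \<in> Lie_n n" "g \<in> Lie_n n"
    and "(\<lambda>t. bracket_image lnorm f t + bracket_image rnorm g t) = (\<lambda>_. 0)"
  shows "f = (\<lambda>_. 0) \<and> g = (\<lambda>_. 0)"
proof (intro conjI ext)
  fix w
  have sum_zero: "bracket_image lnorm f t + bracket_image rnorm g t = 0" for t
    using assms(4) by (rule fun_cong)
  have "lnorm w \<noteq> rnorm w" if "f w \<noteq> 0 \<or> g w \<noteq> 0"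
    using that assms(1-3) length_Lie_n lnorm_neq_rnorm by metis
  then show "f w = 0" "g w = 0"
    using sum_zero[of "lnorm w"] sum_zero[of "rnorm w"] assms(2,3)
    by (auto simp: finite_support_Lie_n lnorm.bracket_image_eq rnorm.bracket_image_eq split: if_splits)
qed

theorem proposition4p8p4:
  fixes a :: "'k::field_char_0 assoc" and n :: nat
  assumes hom: "\<forall>w. a w \<noteq> 0 \<longrightarrow> length w = n \<and> set w \<subseteq> {1..n}"
    and prim: "aprim a"
  shows "mprim (bracket_image lnorm a)
     \<and> (\<forall>t. bracket_image lnorm a t \<noteq> 0 \<longrightarrow>
            mnormal t \<and> length (leaves t) = n \<and> set (leaves t) \<subseteq> {1..n})
     \<and> mprim (bracket_image rnorm a)
     \<and> (\<forall>t. bracket_image rnorm a t \<noteq> 0 \<longrightarrow>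
            mnormal t \<and> length (leaves t) = n \<and> set (leaves t) \<subseteq> {1..n})
     \<and> (n \<ge> 3 \<longrightarrow>
         (\<exists>\<phi> \<psi> :: 'k assoc \<Rightarrow> 'k magma.
            (\<forall>f\<in>Lie_n n. \<phi> f \<in> Prim_Mag_n n \<and> \<psi> f \<in> Prim_Mag_n n)
          \<and> (\<forall>f\<in>Lie_n n. \<forall>g\<in>Lie_n n. \<forall>c::'k.
               \<phi> (\<lambda>w. c * f w + g w) = (\<lambda>t. c * \<phi> f t + \<phi> g t)
             \<and> \<psi> (\<lambda>w. c * f w + g w) = (\<lambda>t. c * \<psi> f t + \<psi> g t))
          \<and> (\<forall>\<sigma>. \<sigma> permutes {1..n} \<longrightarrow> (\<forall>f\<in>Lie_n n.
               \<phi> (\<lambda>w. f (map \<sigma> w)) = (\<lambda>t. \<phi> f (map_leaves \<sigma> t))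
             \<and> \<psi> (\<lambda>w. f (map \<sigma> w)) = (\<lambda>t. \<psi> f (map_leaves \<sigma> t))))
          \<and> (\<forall>f\<in>Lie_n n. \<forall>g\<in>Lie_n n.
               (\<lambda>t. \<phi> f t + \<psi> g t) = (\<lambda>_. 0) \<longrightarrow> f = (\<lambda>_. 0) \<and> g = (\<lambda>_. 0))))"
proof (intro conjI impI)
  have fin: "finite {w. a w \<noteq> 0}"
    using prim by (simp add: aprim_def)
  show "mprim (bracket_image lnorm a)"
    using mdelta_basis_lnorm prim by (rule lnorm.mprim_bracket_image)
  show "mprim (bracket_image rnorm a)"
    using mdelta_basis_rnorm prim by (rule rnorm.mprim_bracket_image)
  show "\<forall>t. bracket_image lnorm a t \<noteq> 0 \<longrightarrow>
      mnormal t \<and> length (leaves t) = n \<and> set (leaves t) \<subseteq> {1..n}"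
    using lnorm.bracket_image_nonzeroD[OF fin] hom by blast
  show "\<forall>t. bracket_image rnorm a t \<noteq> 0 \<longrightarrow>
      mnormal t \<and> length (leaves t) = n \<and> set (leaves t) \<subseteq> {1..n}"
    using rnorm.bracket_image_nonzeroD[OF fin] hom by blast
qed (rule exI[of _ "bracket_image lnorm"], rule exI[of _ "bracket_image rnorm"],
  auto simp: finite_support_Lie_n permutes_inj
    lnorm.bracket_image_lincomb rnorm.bracket_image_lincomb
    lnorm.bracket_image_permute rnorm.bracket_image_permute
  intro: lnorm.bracket_image_Prim_Mag_n[OF mdelta_basis_lnorm]
      rnorm.bracket_image_Prim_Mag_n[OF mdelta_basis_rnorm]
    dest: bracket_images_independent)

end
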